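(* Let $(Z,Z_{ac},e)$ be an accretive archimedean matrix-order unit space. For $z\in M_n(Z)$ define $\nu_e^n(z)=\inf\{t>0: te\otimes I_n-z\in Z_{ac}^n\}$. Then $\nu_e=\{\nu_e^n\}$ is a matrix gauge on $Z$ (so $(Z,\nu_e)$ is a matrix gauge space), and for each $n$, $Z_{ac}^n=\{z\in M_n(Z):\nu_e^n(-z)=0\}$.
   Context: For a complex vector space $Z$, $M_n(Z)$ is the $n\times n$ matrices over $Z$; $e\otimes I_n$ is the diagonal matrix with all diagonal entries $e$. A cone is a set $C$ with $C+C\subseteq C$, $tC\subseteq C$ ($t\ge0$); a matrix cone is a sequence of cones $C_n\subseteq M_n(Z)$ with $X^*C_nX\subseteq C_k$ for scalar $X\in M_{n,k}$; it is $\mathbb{C}$-proper if $C_1\cap-C_1\cap iC_1\cap-iC_1=\{0\}$, making $(Z,Z_{ac})$ an accretive matrix-ordered vector space, with $Z_{sa}^n=iZ_{ac}^n\cap-iZ_{ac}^n$. An element $e\in Z_{sa}^1$ is an accretive matrix-order unit if for each $n$ and $z\in M_n(Z)$ there is $t>0$ with $te\otimes I_n+z\in Z_{ac}^n$; it is archimedean if $te\otimes I_n+z\in Z_{ac}^n$ for all $t>0$ implies $z\in Z_{ac}^n$; then $(Z,Z_{ac},e)$ is an accretive archimedean matrix-order unit space. A matrix gauge is a sequence $\{\nu_n:M_n(Z)\to[0,\infty)\}$ with $\nu_n(x+y)\le\nu_n(x)+\nu_n(y)$, $\nu_n(tx)=t\nu_n(x)$ ($t\ge0$), $\nu_k(X^*AX)\le\|X\|^2\nu_n(A)$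 for scalar $X\in M_{n,k}$, and $\nu_{n+m}(A\oplus B)=\max\{\nu_n(A),\nu_m(B)\}$. *)

theory Defs
  imports "HOL-Analysis.Analysis"
begin

text \<open>Matrices over a complex vector space Z of size n x n are represented as
functions nat => nat => 'z that vanish outside {0..<n} x {0..<n}.
Scalar matrices X in M_{n,k}(C) are functions nat => nat => complex, of which
only the entries (i,j) with i<n, j<k are used.\<close>

type_synonym 'z mat = "nat \<Rightarrow> nat \<Rightarrow> 'z"

definition Mn :: "nat \<Rightarrow> 'z::zero mat set" where
  "Mn n = {A. \<forall>i j. \<not>(i < n \<and> j < n) \<longrightarrow> A i j = 0}"

definition madd :: "'z::plus mat \<Rightarrow> 'z mat \<Rightarrow> 'z mat" where
  "madd A B = (\<lambda>i j. A i j + B i j)"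

definition mneg :: "'z::uminus mat \<Rightarrow> 'z mat" where
  "mneg A = (\<lambda>i j. - A i j)"

definition mdiff :: "'z::minus mat \<Rightarrow> 'z mat \<Rightarrow> 'z mat" where
  "mdiff A B = (\<lambda>i j. A i j - B i j)"

text \<open>Z is a complex vector space given by a type 'z::ab_group_add together with a
scalar multiplication sc :: complex => 'z => 'z satisfying vector_space sc.
Real scalars act via complex_of_real.\<close>

definition mscaleC :: "(complex \<Rightarrow> 'z \<Rightarrow> 'z) \<Rightarrow> complex \<Rightarrow> 'z mat \<Rightarrow> 'z mat" where
  "mscaleC sc c A = (\<lambda>i j. sc c (A i j))"

definition mscaleR :: "(complex \<Rightarrow> 'z \<Rightarrow> 'z) \<Rightarrow> real \<Rightarrow> 'z mat \<Rightarrow> 'z mat" where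
  "mscaleR sc t A = mscaleC sc (complex_of_real t) A"

definition congr :: "(complex \<Rightarrow> 'z::comm_monoid_add \<Rightarrow> 'z) \<Rightarrow> nat \<Rightarrow> nat \<Rightarrow> complex mat \<Rightarrow> 'z mat \<Rightarrow> 'z mat" where
  "congr sc n k X A = (\<lambda>i j. if i < k \<and> j < k then
      (\<Sum>p<n. \<Sum>q<n. sc (cnj (X p i) * X q j) (A p q)) else 0)"

definition ediag :: "nat \<Rightarrow> 'z::zero \<Rightarrow> 'z mat" where
  "ediag n e = (\<lambda>i j. if i < n \<and> i = j then e else 0)"

definition dsum :: "nat \<Rightarrow> nat \<Rightarrow> 'z::zero mat \<Rightarrow> 'z mat \<Rightarrow> 'z mat" where
  "dsum n m A B = (\<lambda>i j. if i < n \<and> j < n then A i j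
      else if n \<le> i \<and> i < n + m \<and> n \<le> j \<and> j < n + m then B (i - n) (j - n) else 0)"

definition opnorm :: "nat \<Rightarrow> nat \<Rightarrow> complex mat \<Rightarrow> real" where
  "opnorm n k X = (SUP v \<in> {v :: nat \<Rightarrow> complex. (\<Sum>j<k. (cmod (v j))\<^sup>2) \<le> 1}.
      sqrt (\<Sum>i<n. (cmod (\<Sum>j<k. X i j * v j))\<^sup>2))"

definition mat_cone :: "(complex \<Rightarrow> 'z::ab_group_add \<Rightarrow> 'z) \<Rightarrow> (nat \<Rightarrow> 'z mat set) \<Rightarrow> bool" where
  "mat_cone sc C \<longleftrightarrow>
     (\<forall>n\<ge>1. C n \<subseteq> Mn n
        \<and> (\<forall>A\<in>C n. \<forall>B\<in>C n. madd A B \<in> C n)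
        \<and> (\<forall>t\<ge>0. \<forall>A\<in>C n. mscaleR sc t A \<in> C n))
   \<and> (\<forall>n\<ge>1. \<forall>k\<ge>1. \<forall>X. \<forall>A\<in>C n. congr sc n k X A \<in> C k)"

definition C_proper :: "(complex \<Rightarrow> 'z::ab_group_add \<Rightarrow> 'z) \<Rightarrow> (nat \<Rightarrow> 'z mat set) \<Rightarrow> bool" where
  "C_proper sc C \<longleftrightarrow> C 1 \<inter> mneg ` C 1 \<inter> mscaleC sc \<i> ` C 1 \<inter> mscaleC sc (-\<i>) ` C 1 \<subseteq> {\<lambda>i j. 0}"

definition Zsa :: "(complex \<Rightarrow> 'z::ab_group_add \<Rightarrow> 'z) \<Rightarrow> (nat \<Rightarrow> 'z mat set) \<Rightarrow> nat \<Rightarrow> 'z mat set" where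
  "Zsa sc C n = mscaleC sc \<i> ` C n \<inter> mscaleC sc (-\<i>) ` C n"

definition order_unit :: "(complex \<Rightarrow> 'z::ab_group_add \<Rightarrow> 'z) \<Rightarrow> (nat \<Rightarrow> 'z mat set) \<Rightarrow> 'z \<Rightarrow> bool" where
  "order_unit sc C e \<longleftrightarrow> ediag 1 e \<in> Zsa sc C 1 \<and>
     (\<forall>n\<ge>1. \<forall>z\<in>Mn n. \<exists>t>0. madd (mscaleR sc t (ediag n e)) z \<in> C n)"

definition archimedean :: "(complex \<Rightarrow> 'z::ab_group_add \<Rightarrow> 'z) \<Rightarrow> (nat \<Rightarrow> 'z mat set) \<Rightarrow> 'z \<Rightarrow> bool" where
  "archimedean sc C e \<longleftrightarrow>
     (\<forall>n\<ge>1. \<forall>z\<in>Mn n. (\<forall>t>0. madd (mscaleR sc t (ediag n e)) z \<in> C n) \<longrightarrow> z \<in> C n)"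

definition accretive_AMOU_space :: "(complex \<Rightarrow> 'z::ab_group_add \<Rightarrow> 'z) \<Rightarrow> (nat \<Rightarrow> 'z mat set) \<Rightarrow> 'z \<Rightarrow> bool" where
  "accretive_AMOU_space sc C e \<longleftrightarrow> vector_space sc \<and> mat_cone sc C \<and> C_proper sc C \<and> order_unit sc C e \<and> archimedean sc C e"

definition matrix_gauge :: "(complex \<Rightarrow> 'z::ab_group_add \<Rightarrow> 'z) \<Rightarrow> (nat \<Rightarrow> 'z mat \<Rightarrow> real) \<Rightarrow> bool" where
  "matrix_gauge sc \<nu> \<longleftrightarrow>
     (\<forall>n\<ge>1. \<forall>A\<in>Mn n. \<nu> n A \<ge> 0)
   \<and> (\<forall>n\<ge>1. \<forall>A\<in>Mn n. \<forall>B\<in>Mn n. \<nu> n (madd A B) \<le> \<nu> n A + \<nu> n B)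
   \<and> (\<forall>n\<ge>1. \<forall>A\<in>Mn n. \<forall>t\<ge>0. \<nu> n (mscaleR sc t A) = t * \<nu> n A)
   \<and> (\<forall>n\<ge>1. \<forall>k\<ge>1. \<forall>X. \<forall>A\<in>Mn n. \<nu> k (congr sc n k X A) \<le> (opnorm n k X)\<^sup>2 * \<nu> n A)
   \<and> (\<forall>n\<ge>1. \<forall>m\<ge>1. \<forall>A\<in>Mn n. \<forall>B\<in>Mn m. \<nu> (n + m) (dsum n m A B) = max (\<nu> n A) (\<nu> m B))"

definition nu_e :: "(complex \<Rightarrow> 'z::ab_group_add \<Rightarrow> 'z) \<Rightarrow> (nat \<Rightarrow> 'z mat set) \<Rightarrow> 'z \<Rightarrow> nat \<Rightarrow> 'z mat \<Rightarrow> real" where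
  "nu_e sc C e n z = Inf {t. t > 0 \<and> mdiff (mscaleR sc t (ediag n e)) z \<in> C n}"

end

theory Submission
  imports Defs
begin

text \<open>
  The set of admissible t for z is nonempty (order unit) and upward closed (e \<otimes> I_n lies in
  the cone), so \<nu>_e is the infimum of a ray. Adding and scaling admissible witnesses gives
  subadditivity and homogeneity; compressing to and embedding from diagonal corners gives the
  direct-sum rule; and the archimedean property characterises the cone. The congruence bound
  rests on the identity
    X^*(t e \<otimes> I_n - A)X + t (r^2 I - X^*X) \<otimes> e = t r^2 e \<otimes> I_k - X^*AX,
  where r \<ge> \<parallel>X\<parallel> makes r^2 I - X^*X positive semidefinite, and every positive semidefinite
  scalar matrix P has P \<otimes> e in the cone: peeling off one rank-one term at a time
  (a Cholesky step) writes P \<otimes> e as a sum of congruences of e \<otimes> I_1.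
\<close>

subsection \<open>Positive semidefinite scalar matrices\<close>

definition sesq_form :: "nat \<Rightarrow> complex mat \<Rightarrow> (nat \<Rightarrow> complex) \<Rightarrow> (nat \<Rightarrow> complex) \<Rightarrow> complex" where
  "sesq_form k P x y = (\<Sum>a<k. \<Sum>b<k. cnj (x a) * P a b * y b)"

definition hermitian :: "nat \<Rightarrow> complex mat \<Rightarrow> bool" where
  "hermitian k P \<longleftrightarrow> (\<forall>a<k. \<forall>b<k. P b a = cnj (P a b))"

definition pos_semidef :: "nat \<Rightarrow> complex mat \<Rightarrow> bool" where
  "pos_semidef k P \<longleftrightarrow> hermitian k P \<and> (\<forall>v. 0 \<le> Re (sesq_form k P v v))"

definition unit_vec :: "nat \<Rightarrow> nat \<Rightarrow> complex" where
  "unit_vec i = (\<lambda>a. if a = i then 1 else 0)"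

lemma sesq_form_add_scaled:
  "sesq_form k P (\<lambda>a. u a + c * w a) (\<lambda>a. u a + c * w a) =
   sesq_form k P u u + c * sesq_form k P u w + cnj c * sesq_form k P w u + c * cnj c * sesq_form k P w w"
  unfolding sesq_form_def by (simp add: algebra_simps sum.distrib sum_distrib_left)

lemma sesq_form_unit_vec_left:
  "sesq_form k P (unit_vec i) y = (if i < k then \<Sum>b<k. P i b * y b else 0)"
proof -
  have "(\<Sum>b<k. cnj (unit_vec i a) * P a b * y b) = (if a = i then \<Sum>b<k. P i b * y b else 0)" for a
    by (simp add: unit_vec_def)
  then show ?thesis unfolding sesq_form_def by simp
qed

lemma sesq_form_unit_vec_right:
  "sesq_form k P x (unit_vec j) = (if j < k then \<Sum>a<k. cnj (x a) * P a j else 0)"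
proof -
  have "(\<Sum>b<k. cnj (x a) * P a b * unit_vec j b) = (if j < k then cnj (x a) * P a j else 0)" for a
    by (simp add: unit_vec_def if_distrib cong: if_cong)
  then show ?thesis unfolding sesq_form_def by simp
qed

lemma sesq_form_unit_vecs:
  "sesq_form k P (unit_vec i) (unit_vec j) = (if i < k \<and> j < k then P i j else 0)"
  unfolding sesq_form_unit_vec_left by (simp add: unit_vec_def if_distrib cong: if_cong)

lemma cnj_mult_self: "cnj z * z = complex_of_real ((cmod z)\<^sup>2)"
  by (simp only: complex_norm_square) (simp add: mult.commute)

lemma hermitian_diag_real:
  assumes "hermitian k P" "i < k"
  shows "P i i = complex_of_real (Re (P i i))"
proof -
  have "P i i = cnj (P i i)" using assms unfolding hermitian_def by blast
  then have "Im (P i i) = 0" by (metis Reals_cnj_iff complex_is_Real_iff)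
  then show ?thesis by (simp add: complex_eq_iff)
qed

lemma pos_semidef_diag:
  assumes "pos_semidef k P" "i < k"
  shows "P i i = complex_of_real (Re (P i i))" "Re (P i i) \<ge> 0"
proof -
  show "P i i = complex_of_real (Re (P i i))"
    using assms hermitian_diag_real unfolding pos_semidef_def by blast
  have "0 \<le> Re (sesq_form k P (unit_vec i) (unit_vec i))" using assms unfolding pos_semidef_def by auto
  then show "Re (P i i) \<ge> 0" using assms by (simp add: sesq_form_unit_vecs)
qed

lemma pos_semidef_hermitian: "pos_semidef k P \<Longrightarrow> hermitian k P"
  unfolding pos_semidef_def by simp

lemma pos_semidef_diag_pos:
  assumes "pos_semidef k P" "i < k" "P i i \<noteq> 0"
  shows "Re (P i i) > 0"
  using pos_semidef_diag[OF assms(1,2)] assms(3) by (metis less_eq_real_def of_real_0)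

lemma pos_semidef_zero_diag:
  assumes "pos_semidef k P" "\<forall>i<k. P i i = 0" "a < k" "b < k"
  shows "P b a = 0"
proof -
  have herm: "P a b = cnj (P b a)" using assms unfolding pos_semidef_def hermitian_def by blast
  define c where "c = - cnj (P b a)"
  have "0 \<le> Re (sesq_form k P (\<lambda>x. unit_vec b x + c * unit_vec a x) (\<lambda>x. unit_vec b x + c * unit_vec a x))"
    using assms unfolding pos_semidef_def by auto
  also have "sesq_form k P (\<lambda>x. unit_vec b x + c * unit_vec a x) (\<lambda>x. unit_vec b x + c * unit_vec a x)
      = - 2 * complex_of_real ((cmod (P b a))\<^sup>2)"
    unfolding sesq_form_add_scaled sesq_form_unit_vecs c_def herm
    using assms by (simp add: algebra_simps complex_norm_square del: of_real_power)
  finally have "(cmod (P b a))\<^sup>2 \<le> 0" by simp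
  then show ?thesis by simp
qed

text \<open>One step of Cholesky factorisation: the Schur complement of the pivot P i i.\<close>

definition schur_step :: "complex mat \<Rightarrow> nat \<Rightarrow> complex mat" where
  "schur_step P i = (\<lambda>a b. P a b - P a i * cnj (P b i) / P i i)"

lemma sesq_form_schur_step:
  fixes v :: "nat \<Rightarrow> complex"
  assumes herm: "hermitian k P" and i: "i < k" and nz: "P i i \<noteq> 0"
  defines "\<alpha> \<equiv> \<Sum>b<k. P i b * v b"
  shows "sesq_form k (schur_step P i) v v =
    sesq_form k P (\<lambda>x. v x + (- \<alpha> / P i i) * unit_vec i x) (\<lambda>x. v x + (- \<alpha> / P i i) * unit_vec i x)"
proof -
  define d where "d = Re (P i i)"
  have Pii: "P i i = complex_of_real d" using hermitian_diag_real[OF herm i] unfolding d_def .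
  have d: "d \<noteq> 0" using nz Pii by auto
  have herm_at: "a < k \<Longrightarrow> b < k \<Longrightarrow> P b a = cnj (P a b)" for a b
    using herm unfolding hermitian_def by blast
  have row: "(\<Sum>b<k. cnj (P b i) * v b) = \<alpha>"
    unfolding \<alpha>_def by (rule sum.cong) (use herm_at[OF _ i] in auto)
  have col: "(\<Sum>a<k. cnj (v a) * P a i) = cnj \<alpha>"
    unfolding \<alpha>_def cnj_sum by (rule sum.cong) (use herm_at[OF i] in \<open>auto simp: mult.commute\<close>)
  have "sesq_form k (schur_step P i) v v =
      sesq_form k P v v - (\<Sum>a<k. \<Sum>b<k. (cnj (v a) * P a i) * (cnj (P b i) * v b)) / complex_of_real d"
    unfolding sesq_form_def schur_step_def Pii sum_divide_distrib sum_subtractf[symmetric]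
    by (intro sum.cong refl) (simp add: algebra_simps)
  also have "\<dots> = sesq_form k P v v - cnj \<alpha> * \<alpha> / complex_of_real d"
    unfolding sum_product[symmetric] row col ..
  also have "\<dots> = sesq_form k P (\<lambda>x. v x + (- \<alpha> / P i i) * unit_vec i x) (\<lambda>x. v x + (- \<alpha> / P i i) * unit_vec i x)"
  proof -
    have "sesq_form k P (unit_vec i) (unit_vec i) = complex_of_real d"
      using i Pii by (simp add: sesq_form_unit_vecs)
    moreover have "sesq_form k P v (unit_vec i) = cnj \<alpha>"
      using i col by (simp add: sesq_form_unit_vec_right)
    moreover have "sesq_form k P (unit_vec i) v = \<alpha>"
      using i by (simp add: sesq_form_unit_vec_left \<alpha>_def)
    ultimately show ?thesis
      unfolding sesq_form_add_scaled Pii using d by (simp add: field_simps)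
  qed
  finally show ?thesis .
qed

lemma pos_semidef_schur_step:
  assumes psd: "pos_semidef k P" and i: "i < k" and nz: "P i i \<noteq> 0"
  shows "pos_semidef k (schur_step P i)"
proof -
  have herm: "\<And>a b. a < k \<Longrightarrow> b < k \<Longrightarrow> P b a = cnj (P a b)"
    using psd unfolding pos_semidef_def hermitian_def by blast
  have real: "cnj (P i i) = P i i"
    using pos_semidef_diag(1)[OF psd i] by (metis complex_cnj_complex_of_real)
  have "hermitian k (schur_step P i)"
    unfolding hermitian_def schur_step_def
  proof (intro allI impI)
    fix a b assume "a < k" "b < k"
    then show "P b a - P b i * cnj (P a i) / P i i = cnj (P a b - P a i * cnj (P b i) / P i i)"
      using herm[of a b] real by (simp add: mult.commute)
  qed
  moreover have "0 \<le> Re (sesq_form k (schur_step P i) v v)" for v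
    unfolding sesq_form_schur_step[OF pos_semidef_hermitian[OF psd] i nz]
    using psd unfolding pos_semidef_def by blast
  ultimately show ?thesis unfolding pos_semidef_def by auto
qed

lemma schur_step_fewer_nonzero_diag:
  assumes psd: "pos_semidef k P" and i: "i < k" and nz: "P i i \<noteq> 0"
  shows "card {j. j < k \<and> schur_step P i j j \<noteq> 0} < card {j. j < k \<and> P j j \<noteq> 0}"
proof (rule psubset_card_mono)
  define d where "d = Re (P i i)"
  have Pii: "P i i = complex_of_real d" unfolding d_def by (rule pos_semidef_diag(1)[OF psd i])
  have d: "d > 0" using pos_semidef_diag_pos[OF psd i nz] unfolding d_def .
  have "schur_step P i j j = 0" if j: "j < k" "P j j = 0" for j
  proof -
    have "Re (schur_step P i j j) = - (cmod (P j i))\<^sup>2 / d"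
      unfolding schur_step_def Pii using j(2)
      by (simp add: mult.commute[of "P j i"] cnj_mult_self del: of_real_power)
    moreover have "Re (schur_step P i j j) \<ge> 0"
      by (rule pos_semidef_diag(2)[OF pos_semidef_schur_step[OF psd i nz] j(1)])
    ultimately have "P j i = 0" using d by (simp add: divide_le_0_iff)
    then show ?thesis unfolding schur_step_def using j(2) by simp
  qed
  moreover have "schur_step P i i i = 0" unfolding schur_step_def using Pii d by auto
  ultimately show "{j. j < k \<and> schur_step P i j j \<noteq> 0} \<subset> {j. j < k \<and> P j j \<noteq> 0}"
    using i nz by blast
qed simp

subsection \<open>The operator norm\<close>

definition mat_vec :: "nat \<Rightarrow> complex mat \<Rightarrow> (nat \<Rightarrow> complex) \<Rightarrow> nat \<Rightarrow> complex" where
  "mat_vec k X v = (\<lambda>p. \<Sum>j<k. X p j * v j)"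

definition unit_ball :: "nat \<Rightarrow> (nat \<Rightarrow> complex) set" where
  "unit_ball k = {v. (\<Sum>j<k. (cmod (v j))\<^sup>2) \<le> 1}"

lemma opnorm_unit_ball: "opnorm n k X = (SUP v \<in> unit_ball k. sqrt (\<Sum>i<n. (cmod (mat_vec k X v i))\<^sup>2))"
  unfolding opnorm_def unit_ball_def mat_vec_def ..

lemma bdd_above_opnorm: "bdd_above ((\<lambda>v. sqrt (\<Sum>i<n. (cmod (mat_vec k X v i))\<^sup>2)) ` unit_ball k)"
proof (rule bdd_aboveI2)
  fix v assume v: "v \<in> unit_ball k"
  have vj: "cmod (v j) \<le> 1" if "j < k" for j
  proof -
    have "(cmod (v j))\<^sup>2 \<le> (\<Sum>j<k. (cmod (v j))\<^sup>2)"
      by (rule member_le_sum) (use that in auto)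
    then have "(cmod (v j))\<^sup>2 \<le> 1" using v unfolding unit_ball_def by simp
    then show ?thesis by (simp add: power_le_one_iff abs_square_le_1)
  qed
  have "cmod (mat_vec k X v i) \<le> (\<Sum>j<k. cmod (X i j))" for i
  proof -
    have "cmod (mat_vec k X v i) \<le> (\<Sum>j<k. cmod (X i j * v j))" unfolding mat_vec_def by (rule norm_sum)
    also have "\<dots> \<le> (\<Sum>j<k. cmod (X i j))"
      using vj by (intro sum_mono) (simp add: norm_mult mult_left_le)
    finally show ?thesis .
  qed
  then have "(\<Sum>i<n. (cmod (mat_vec k X v i))\<^sup>2) \<le> (\<Sum>i<n. (\<Sum>j<k. cmod (X i j))\<^sup>2)"
    by (intro sum_mono power_mono) auto
  then show "sqrt (\<Sum>i<n. (cmod (mat_vec k X v i))\<^sup>2) \<le> sqrt (\<Sum>i<n. (\<Sum>j<k. cmod (X i j))\<^sup>2)"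
    by simp
qed

lemma opnorm_upper: "v \<in> unit_ball k \<Longrightarrow> sqrt (\<Sum>i<n. (cmod (mat_vec k X v i))\<^sup>2) \<le> opnorm n k X"
  unfolding opnorm_unit_ball by (rule cSUP_upper[OF _ bdd_above_opnorm])

lemma opnorm_nonneg: "opnorm n k X \<ge> 0"
  using opnorm_upper[where v="\<lambda>_. 0" and k=k and n=n and X=X] by (simp add: unit_ball_def mat_vec_def)

lemma norm_mat_vec_le_opnorm:
  "(\<Sum>i<n. (cmod (mat_vec k X v i))\<^sup>2) \<le> (opnorm n k X)\<^sup>2 * (\<Sum>j<k. (cmod (v j))\<^sup>2)"
proof (cases "(\<Sum>j<k. (cmod (v j))\<^sup>2) = 0")
  case True
  then have "\<forall>j\<in>{..<k}. v j = 0" by (subst (asm) sum_nonneg_eq_0_iff) auto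
  then have "mat_vec k X v i = 0" for i unfolding mat_vec_def by simp
  then show ?thesis using True by simp
next
  case False
  define N2 where "N2 = (\<Sum>j<k. (cmod (v j))\<^sup>2)"
  have N2: "N2 > 0" using False unfolding N2_def by (simp add: order_less_le sum_nonneg)
  define u where "u = (\<lambda>j. v j / complex_of_real (sqrt N2))"
  have "(\<Sum>j<k. (cmod (u j))\<^sup>2) = 1"
    using N2 unfolding u_def N2_def by (simp add: norm_divide power_divide flip: sum_divide_distrib)
  then have "sqrt (\<Sum>i<n. (cmod (mat_vec k X u i))\<^sup>2) \<le> opnorm n k X"
    by (intro opnorm_upper) (simp add: unit_ball_def)
  moreover have "(\<Sum>i<n. (cmod (mat_vec k X u i))\<^sup>2) = (\<Sum>i<n. (cmod (mat_vec k X v i))\<^sup>2) / N2"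
  proof -
    have "mat_vec k X u i = mat_vec k X v i / complex_of_real (sqrt N2)" for i
      unfolding mat_vec_def u_def by (simp add: sum_divide_distrib)
    then show ?thesis using N2 by (simp add: norm_divide power_divide sum_divide_distrib)
  qed
  ultimately have "sqrt ((\<Sum>i<n. (cmod (mat_vec k X v i))\<^sup>2) / N2) \<le> opnorm n k X" by simp
  then have "(\<Sum>i<n. (cmod (mat_vec k X v i))\<^sup>2) / N2 \<le> (opnorm n k X)\<^sup>2"
    by (simp add: sqrt_le_D)
  then show ?thesis using N2 unfolding N2_def[symmetric] by (simp add: field_simps)
qed

definition opnorm_gap :: "nat \<Rightarrow> complex mat \<Rightarrow> real \<Rightarrow> complex mat" where
  "opnorm_gap n X r = (\<lambda>a b. complex_of_real (r\<^sup>2) * (if a = b then 1 else 0) - (\<Sum>p<n. cnj (X p a) * X p b))"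

lemma sesq_form_opnorm_gap:
  "sesq_form k (opnorm_gap n X r) v v =
   complex_of_real (r\<^sup>2) * (\<Sum>a<k. cnj (v a) * v a) - (\<Sum>p<n. cnj (mat_vec k X v p) * mat_vec k X v p)"
proof -
  have diag: "(\<Sum>a<k. \<Sum>b<k. cnj (v a) * (complex_of_real (r\<^sup>2) * (if a = b then 1 else 0)) * v b)
      = complex_of_real (r\<^sup>2) * (\<Sum>a<k. cnj (v a) * v a)"
  proof -
    have "(\<Sum>b<k. cnj (v a) * (complex_of_real (r\<^sup>2) * (if a = b then 1 else 0)) * v b)
       = (if a < k then complex_of_real (r\<^sup>2) * (cnj (v a) * v a) else 0)" for a
    proof -
      have "(\<Sum>b<k. cnj (v a) * (complex_of_real (r\<^sup>2) * (if a = b then 1 else 0)) * v b)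
        = (\<Sum>b<k. if a = b then complex_of_real (r\<^sup>2) * (cnj (v a) * v a) else 0)"
        by (rule sum.cong) auto
      then show ?thesis by simp
    qed
    then show ?thesis by (simp add: sum_distrib_left)
  qed
  have "(\<Sum>a<k. \<Sum>b<k. cnj (v a) * (\<Sum>p<n. cnj (X p a) * X p b) * v b)
     = (\<Sum>a<k. \<Sum>b<k. \<Sum>p<n. (cnj (X p a) * cnj (v a)) * (X p b * v b))"
    by (simp add: sum_distrib_left sum_distrib_right algebra_simps)
  also have "\<dots> = (\<Sum>a<k. \<Sum>p<n. \<Sum>b<k. (cnj (X p a) * cnj (v a)) * (X p b * v b))"
    by (rule sum.cong[OF refl], rule sum.swap)
  also have "\<dots> = (\<Sum>p<n. \<Sum>a<k. \<Sum>b<k. (cnj (X p a) * cnj (v a)) * (X p b * v b))"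
    by (rule sum.swap)
  also have "\<dots> = (\<Sum>p<n. cnj (mat_vec k X v p) * mat_vec k X v p)"
    unfolding mat_vec_def cnj_sum complex_cnj_mult sum_product ..
  finally have gram: "(\<Sum>a<k. \<Sum>b<k. cnj (v a) * (\<Sum>p<n. cnj (X p a) * X p b) * v b)
     = (\<Sum>p<n. cnj (mat_vec k X v p) * mat_vec k X v p)" .
  show ?thesis
    unfolding diag[symmetric] gram[symmetric] sesq_form_def opnorm_gap_def sum_subtractf[symmetric]
    by (intro sum.cong refl) (simp add: algebra_simps)
qed

lemma pos_semidef_opnorm_gap:
  assumes "r \<ge> opnorm n k X"
  shows "pos_semidef k (opnorm_gap n X r)"
proof -
  have "hermitian k (opnorm_gap n X r)" unfolding hermitian_def opnorm_gap_def
    by (simp add: mult.commute)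
  moreover have "0 \<le> Re (sesq_form k (opnorm_gap n X r) v v)" for v
  proof -
    have "(opnorm n k X)\<^sup>2 \<le> r\<^sup>2" using assms opnorm_nonneg by (intro power_mono) auto
    then have "(opnorm n k X)\<^sup>2 * (\<Sum>a<k. (cmod (v a))\<^sup>2) \<le> r\<^sup>2 * (\<Sum>a<k. (cmod (v a))\<^sup>2)"
      by (intro mult_right_mono sum_nonneg) auto
    then show ?thesis
      using norm_mat_vec_le_opnorm[where n=n and k=k and X=X and v=v]
      unfolding sesq_form_opnorm_gap cnj_mult_self by (simp del: of_real_power)
  qed
  ultimately show ?thesis unfolding pos_semidef_def by auto
qed

subsection \<open>Matrix congruences by selection matrices\<close>

lemma sum_shift_delta:
  "(\<Sum>p<(m::nat). if i = c + p then g p else 0) = (if c \<le> i \<and> i < c + m then g (i - c) else (0::'a::comm_monoid_add))"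
proof -
  have "(\<Sum>p<m. if i = c + p then g p else 0) = (\<Sum>p<m. if p = i - c then (if c \<le> i then g p else 0) else 0)"
    by (rule sum.cong) auto
  then show ?thesis by auto
qed

lemma congr_selection:
  assumes "vector_space sc"
  shows "congr sc N n (\<lambda>p i. if p = g i then 1 else 0) M i j =
    (if i < n \<and> j < n \<and> g i < N \<and> g j < N then M (g i) (g j) else 0)"
proof (cases "i < n \<and> j < n")
  case True
  interpret module sc using assms by (simp add: module_iff_vector_space)
  have "(\<Sum>q<N. sc (cnj (if p = g i then 1 else 0) * (if q = g j then 1 else 0)) (M p q))
     = (if p = g i then (if g j < N then M p (g j) else 0) else 0)" for p
  proof -
    have "(\<Sum>q<N. sc (cnj (if p = g i then 1 else 0) * (if q = g j then 1 else 0)) (M p q))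
      = (\<Sum>q<N. if q = g j then (if p = g i then M p q else 0) else 0)"
      by (rule sum.cong) auto
    then show ?thesis by simp
  qed
  then show ?thesis unfolding congr_def using True by simp
qed (auto simp: congr_def)

lemma congr_shift_embedding:
  assumes "vector_space sc"
  shows "congr sc n N (\<lambda>p i. if i = c + p then 1 else 0) M i j =
    (if i < N \<and> j < N \<and> c \<le> i \<and> i < c + n \<and> c \<le> j \<and> j < c + n then M (i - c) (j - c) else 0)"
proof -
  interpret module sc using assms by (simp add: module_iff_vector_space)
  have inner: "(\<Sum>q<n. if i = c + p then (if j = c + q then M p q else 0) else 0) =
      (if i = c + p then (if c \<le> j \<and> j < c + n then M p (j - c) else 0) else 0)" for p
    by (simp add: sum_shift_delta)
  have "congr sc n N (\<lambda>p i. if i = c + p then 1 else 0) M i j =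
    (if i < N \<and> j < N then (\<Sum>p<n. \<Sum>q<n. if i = c + p then (if j = c + q then M p q else 0) else 0) else 0)"
    unfolding congr_def by (intro if_cong refl sum.cong) auto
  then show ?thesis unfolding inner by (simp add: sum_shift_delta)
qed

locale amou_space =
  fixes sc :: "complex \<Rightarrow> 'z::ab_group_add \<Rightarrow> 'z" and C :: "nat \<Rightarrow> 'z mat set" and e :: 'z
  assumes amou: "accretive_AMOU_space sc C e"
begin

sublocale vector_space sc
  using amou unfolding accretive_AMOU_space_def by auto

lemma cone_subset_Mn: "n \<ge> 1 \<Longrightarrow> A \<in> C n \<Longrightarrow> A \<in> Mn n"
  and cone_add: "n \<ge> 1 \<Longrightarrow> A \<in> C n \<Longrightarrow> B \<in> C n \<Longrightarrow> madd A B \<in> C n"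
  and cone_scale: "n \<ge> 1 \<Longrightarrow> t \<ge> 0 \<Longrightarrow> A \<in> C n \<Longrightarrow> mscaleR sc t A \<in> C n"
  and cone_congr: "n \<ge> 1 \<Longrightarrow> k \<ge> 1 \<Longrightarrow> A \<in> C n \<Longrightarrow> congr sc n k X A \<in> C k"
  using amou unfolding accretive_AMOU_space_def mat_cone_def by blast+

lemma order_unit: "n \<ge> 1 \<Longrightarrow> z \<in> Mn n \<Longrightarrow> \<exists>t>0. madd (mscaleR sc t (ediag n e)) z \<in> C n"
  using amou unfolding accretive_AMOU_space_def order_unit_def by blast

lemma archimedean:
  "n \<ge> 1 \<Longrightarrow> z \<in> Mn n \<Longrightarrow> (\<And>t. t > 0 \<Longrightarrow> madd (mscaleR sc t (ediag n e)) z \<in> C n) \<Longrightarrow> z \<in> C n"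
  using amou unfolding accretive_AMOU_space_def archimedean_def by blast

abbreviation eI :: "nat \<Rightarrow> real \<Rightarrow> 'z mat" where
  "eI n t \<equiv> mscaleR sc t (ediag n e)"

abbreviation nu :: "nat \<Rightarrow> 'z mat \<Rightarrow> real" where
  "nu \<equiv> nu_e sc C e"

definition admissible :: "nat \<Rightarrow> 'z mat \<Rightarrow> real set" where
  "admissible n z = {t. t > 0 \<and> mdiff (eI n t) z \<in> C n}"

lemma nu_eq_Inf_admissible: "nu n z = Inf (admissible n z)"
  unfolding nu_e_def admissible_def ..

lemma mscaleR_mscaleR: "mscaleR sc a (mscaleR sc b A) = mscaleR sc (a * b) A"
  unfolding mscaleR_def mscaleC_def by (simp add: mult.commute)

lemma mscaleR_one: "mscaleR sc 1 A = A"
  unfolding mscaleR_def mscaleC_def by simp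

lemma eI_in_cone:
  assumes "n \<ge> 1" "t \<ge> 0"
  shows "eI n t \<in> C n"
proof -
  obtain t0 where t0: "t0 > 0" "madd (eI n t0) (\<lambda>i j. 0) \<in> C n"
    using order_unit[OF assms(1), of "\<lambda>i j. 0"] by (auto simp: Mn_def)
  then have "mscaleR sc (t / t0) (eI n t0) \<in> C n"
    using cone_scale assms by (simp add: madd_def)
  then show ?thesis using t0 by (simp add: mscaleR_mscaleR)
qed

lemma admissible_nonempty:
  assumes "n \<ge> 1" "z \<in> Mn n"
  shows "admissible n z \<noteq> {}"
proof -
  have "mneg z \<in> Mn n" using assms unfolding Mn_def mneg_def by auto
  then obtain t where "t > 0" "madd (eI n t) (mneg z) \<in> C n" using order_unit assms by blast
  moreover have "madd (eI n t) (mneg z) = mdiff (eI n t) z" unfolding madd_def mneg_def mdiff_def by auto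
  ultimately show ?thesis unfolding admissible_def by auto
qed

lemma admissible_upward_closed:
  assumes "n \<ge> 1" "t \<in> admissible n z" "t \<le> t'"
  shows "t' \<in> admissible n z"
proof -
  have "mdiff (eI n t') z = madd (eI n (t' - t)) (mdiff (eI n t) z)"
    unfolding madd_def mdiff_def mscaleR_def mscaleC_def
    by (simp add: algebra_simps)
  then show ?thesis using eI_in_cone cone_add assms unfolding admissible_def by auto
qed

lemma bdd_below_admissible: "bdd_below (admissible n z)"
  unfolding admissible_def bdd_below_def by (rule exI[of _ 0]) auto

lemma nu_nonneg: "n \<ge> 1 \<Longrightarrow> z \<in> Mn n \<Longrightarrow> nu n z \<ge> 0"
  unfolding nu_eq_Inf_admissible
  by (rule cInf_greatest[OF admissible_nonempty]) (auto simp: admissible_def)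

lemma nu_le_admissible: "t \<in> admissible n z \<Longrightarrow> nu n z \<le> t"
  unfolding nu_eq_Inf_admissible by (rule cInf_lower[OF _ bdd_below_admissible])

lemma admissible_if_nu_less:
  assumes "n \<ge> 1" "z \<in> Mn n" "nu n z < t"
  shows "t \<in> admissible n z"
proof -
  obtain s where "s \<in> admissible n z" "s < t"
    using assms admissible_nonempty[OF assms(1,2)] unfolding nu_eq_Inf_admissible by (meson cInf_lessD)
  then show ?thesis using admissible_upward_closed assms by auto
qed

lemma nu_eq_0_if_all_admissible: "(\<And>t. t > 0 \<Longrightarrow> t \<in> admissible n z) \<Longrightarrow> nu n z = 0"
proof -
  assume "\<And>t. t > 0 \<Longrightarrow> t \<in> admissible n z"
  then have "admissible n z = {0<..}" unfolding admissible_def by auto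
  then show ?thesis unfolding nu_eq_Inf_admissible by simp
qed

lemma nu_le_mult_if_admissible_mult:
  assumes "n \<ge> 1" "z \<in> Mn n" "c > 0"
    and "\<And>s. s \<in> admissible n z \<Longrightarrow> c * s \<in> admissible m w"
  shows "nu m w \<le> c * nu n z"
proof -
  have "nu m w / c \<le> nu n z" unfolding nu_eq_Inf_admissible[of n z]
  proof (rule cInf_greatest[OF admissible_nonempty[OF assms(1,2)]])
    fix s assume "s \<in> admissible n z"
    then have "nu m w \<le> c * s" using assms(4) nu_le_admissible by blast
    then show "nu m w / c \<le> s" using assms(3) by (simp add: field_simps)
  qed
  then show ?thesis using assms(3) by (simp add: field_simps)
qed

lemma nu_add_le:
  assumes "n \<ge> 1" "A \<in> Mn n" "B \<in> Mn n"
  shows "nu n (madd A B) \<le> nu n A + nu n B"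
proof (rule field_le_epsilon)
  fix \<epsilon> :: real assume "\<epsilon> > 0"
  define s where "s = nu n A + \<epsilon>/2"
  define s' where "s' = nu n B + \<epsilon>/2"
  have "s \<in> admissible n A" "s' \<in> admissible n B"
    using admissible_if_nu_less assms \<open>\<epsilon> > 0\<close> unfolding s_def s'_def by auto
  moreover have "mdiff (eI n (s + s')) (madd A B) = madd (mdiff (eI n s) A) (mdiff (eI n s') B)"
    unfolding madd_def mdiff_def mscaleR_def mscaleC_def by (auto simp: algebra_simps)
  ultimately have "s + s' \<in> admissible n (madd A B)"
    using cone_add assms unfolding admissible_def by auto
  then show "nu n (madd A B) \<le> nu n A + nu n B + \<epsilon>"
    using nu_le_admissible unfolding s_def s'_def by fastforce
qed

lemma mdiff_eI_mscaleR:
  "mdiff (eI n (t * s)) (mscaleR sc t A) = mscaleR sc t (mdiff (eI n s) A)"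
  unfolding mdiff_def mscaleR_def mscaleC_def by (auto simp: scale_right_diff_distrib mult.commute)

lemma nu_mscaleR:
  assumes "n \<ge> 1" "A \<in> Mn n" "t \<ge> 0"
  shows "nu n (mscaleR sc t A) = t * nu n A"
proof (cases "t = 0")
  case True
  have "nu n (\<lambda>i j. 0) = 0"
    by (rule nu_eq_0_if_all_admissible) (use eI_in_cone assms in \<open>auto simp: admissible_def mdiff_def\<close>)
  moreover have "mscaleR sc t A = (\<lambda>i j. 0)" using True unfolding mscaleR_def mscaleC_def by auto
  ultimately show ?thesis using True by simp
next
  case False
  then have t: "t > 0" using assms by auto
  have tA: "mscaleR sc t A \<in> Mn n" using assms unfolding Mn_def mscaleR_def mscaleC_def by auto
  have "nu n (mscaleR sc t A) \<le> t * nu n A"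
    by (rule nu_le_mult_if_admissible_mult[OF assms(1,2) t])
      (use cone_scale assms t in \<open>auto simp: admissible_def mdiff_eI_mscaleR\<close>)
  moreover have "nu n A \<le> (1 / t) * nu n (mscaleR sc t A)"
  proof (rule nu_le_mult_if_admissible_mult[OF assms(1) tA])
    fix s assume "s \<in> admissible n (mscaleR sc t A)"
    moreover have "mdiff (eI n ((1 / t) * s)) A = mscaleR sc (1 / t) (mdiff (eI n s) (mscaleR sc t A))"
      using mdiff_eI_mscaleR[where n=n and t="1 / t" and s=s and A="mscaleR sc t A"] t by (simp add: mscaleR_mscaleR mscaleR_one)
    ultimately show "(1 / t) * s \<in> admissible n A"
      using cone_scale assms t unfolding admissible_def by auto
  qed (use t in auto)
  ultimately show ?thesis using t by (simp add: field_simps)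
qed

lemma cone_eq_nu_neg_zero:
  assumes "n \<ge> 1"
  shows "C n = {z \<in> Mn n. nu n (mneg z) = 0}"
proof safe
  fix z assume z: "z \<in> C n"
  then show "z \<in> Mn n" using cone_subset_Mn assms by auto
  show "nu n (mneg z) = 0"
    by (rule nu_eq_0_if_all_admissible)
      (use cone_add eI_in_cone z assms in \<open>auto simp: admissible_def madd_def mneg_def mdiff_def\<close>)
next
  fix z assume z: "z \<in> Mn n" "nu n (mneg z) = 0"
  have "mneg z \<in> Mn n" using z unfolding Mn_def mneg_def by auto
  then have "t \<in> admissible n (mneg z)" if "t > 0" for t
    using admissible_if_nu_less assms z that by auto
  then show "z \<in> C n"
    by (intro archimedean[OF assms z(1)]) (auto simp: admissible_def madd_def mneg_def mdiff_def)
qed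

subsection \<open>Positive semidefinite scalar matrices tensored with e\<close>

definition tensor_e :: "nat \<Rightarrow> complex mat \<Rightarrow> 'z mat" where
  "tensor_e k P = (\<lambda>i j. if i < k \<and> j < k then sc (P i j) e else 0)"

lemma tensor_e_schur_step:
  assumes "pos_semidef k P" "i < k" "P i i \<noteq> 0"
  obtains X where "tensor_e k P = madd (tensor_e k (schur_step P i)) (congr sc 1 k X (ediag 1 e))"
proof -
  define d where "d = Re (P i i)"
  have Pii: "P i i = complex_of_real d" unfolding d_def by (rule pos_semidef_diag(1)[OF assms(1,2)])
  have d: "d > 0" using pos_semidef_diag_pos[OF assms] unfolding d_def .
  define X where "X = (\<lambda>(p::nat) b. cnj (P b i) / complex_of_real (sqrt d))"
  have XX: "cnj (X 0 a) * X 0 b = P a i * cnj (P b i) / P i i" for a b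
  proof -
    have "complex_of_real (sqrt d) * complex_of_real (sqrt d) = complex_of_real d"
      using d by (simp flip: of_real_mult)
    then show ?thesis unfolding X_def Pii by (simp add: field_simps)
  qed
  have "tensor_e k P = madd (tensor_e k (schur_step P i)) (congr sc 1 k X (ediag 1 e))"
  proof (intro ext)
    fix a b
    show "tensor_e k P a b = madd (tensor_e k (schur_step P i)) (congr sc 1 k X (ediag 1 e)) a b"
      by (cases "a < k \<and> b < k")
        (auto simp: tensor_e_def madd_def congr_def ediag_def schur_step_def XX scale_left_diff_distrib)
  qed
  then show ?thesis by (rule that)
qed

lemma pos_semidef_tensor_e_in_cone: "k \<ge> 1 \<Longrightarrow> pos_semidef k P \<Longrightarrow> tensor_e k P \<in> C k"
proof (induction "card {j. j < k \<and> P j j \<noteq> 0}" arbitrary: P rule: less_induct)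
  case less
  show ?case
  proof (cases "\<exists>i<k. P i i \<noteq> 0")
    case False
    then have "tensor_e k P = eI k 0"
      using pos_semidef_zero_diag[OF less.prems(2)]
      by (intro ext) (auto simp: tensor_e_def mscaleR_def mscaleC_def)
    then show ?thesis using eI_in_cone less.prems by simp
  next
    case True
    then obtain i where i: "i < k" "P i i \<noteq> 0" by blast
    obtain X where X: "tensor_e k P = madd (tensor_e k (schur_step P i)) (congr sc 1 k X (ediag 1 e))"
      using tensor_e_schur_step less.prems i by blast
    have "tensor_e k (schur_step P i) \<in> C k"
      using less.hyps[of "schur_step P i"] schur_step_fewer_nonzero_diag[OF less.prems(2) i]
        pos_semidef_schur_step[OF less.prems(2) i] less.prems(1) by blast
    moreover have "ediag 1 e \<in> C 1"
      using eI_in_cone[of 1 1] by (simp add: mscaleR_def mscaleC_def)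
    then have "congr sc 1 k X (ediag 1 e) \<in> C k" using cone_congr less.prems(1) by simp
    ultimately show ?thesis unfolding X using cone_add less.prems(1) by blast
  qed
qed

subsection \<open>The matrix gauge axioms\<close>

lemma congr_eI:
  "congr sc n k X (eI n s) i j =
   (if i < k \<and> j < k then sc (complex_of_real s * (\<Sum>p<n. cnj (X p i) * X p j)) e else 0)"
proof (cases "i < k \<and> j < k")
  case True
  have "congr sc n k X (eI n s) i j = (\<Sum>p<n. sc (cnj (X p i) * X p j * complex_of_real s) e)"
    unfolding congr_def mscaleR_def mscaleC_def ediag_def using True
    by (simp add: if_distrib cong: if_cong)
  also have "\<dots> = sc (complex_of_real s * (\<Sum>p<n. cnj (X p i) * X p j)) e"
    by (simp add: scale_sum_left sum_distrib_left mult.commute)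
  finally show ?thesis using True by simp
qed (auto simp: congr_def)

lemma congr_mdiff: "congr sc n k X (mdiff M N) = mdiff (congr sc n k X M) (congr sc n k X N)"
  unfolding congr_def mdiff_def by (intro ext) (simp add: scale_right_diff_distrib sum_subtractf)

lemma mdiff_eI_congr:
  "mdiff (eI k (s * r\<^sup>2)) (congr sc n k X A) =
     madd (mscaleR sc s (tensor_e k (opnorm_gap n X r))) (congr sc n k X (mdiff (eI n s) A))"
proof (intro ext)
  fix i j
  show "mdiff (eI k (s * r\<^sup>2)) (congr sc n k X A) i j =
    madd (mscaleR sc s (tensor_e k (opnorm_gap n X r))) (congr sc n k X (mdiff (eI n s) A)) i j"
  proof (cases "i < k \<and> j < k")
    case True
    then show ?thesis
      unfolding congr_mdiff
      unfolding madd_def mdiff_def congr_eI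
      unfolding mscaleR_def mscaleC_def tensor_e_def opnorm_gap_def ediag_def
      by (simp add: algebra_simps)
  qed (auto simp: madd_def mdiff_def mscaleR_def mscaleC_def tensor_e_def ediag_def congr_def)
qed

lemma admissible_congr:
  assumes "n \<ge> 1" "k \<ge> 1" "s \<in> admissible n A" "r \<ge> opnorm n k X" "r > 0"
  shows "r\<^sup>2 * s \<in> admissible k (congr sc n k X A)"
proof -
  have s: "s > 0" "mdiff (eI n s) A \<in> C n" using assms(3) unfolding admissible_def by auto
  have "mscaleR sc s (tensor_e k (opnorm_gap n X r)) \<in> C k"
    using cone_scale pos_semidef_tensor_e_in_cone pos_semidef_opnorm_gap assms s by simp
  moreover have "congr sc n k X (mdiff (eI n s) A) \<in> C k" using cone_congr assms s by blast
  ultimately show ?thesis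
    using cone_add assms s mdiff_eI_congr[of s r k n X A] unfolding admissible_def
    by (simp add: mult.commute)
qed

lemma nu_congr_le:
  assumes "n \<ge> 1" "k \<ge> 1" "A \<in> Mn n"
  shows "nu k (congr sc n k X A) \<le> (opnorm n k X)\<^sup>2 * nu n A"
proof (rule tendsto_lowerbound)
  let ?r = "\<lambda>\<delta>. opnorm n k X + \<delta>"
  have "((\<lambda>\<delta>. (?r \<delta>)\<^sup>2 * nu n A) \<longlongrightarrow> (?r 0)\<^sup>2 * nu n A) (at_right 0)"
    by (intro tendsto_intros)
  then show "((\<lambda>\<delta>. (?r \<delta>)\<^sup>2 * nu n A) \<longlongrightarrow> (opnorm n k X)\<^sup>2 * nu n A) (at_right 0)"
    by simp
  have "nu k (congr sc n k X A) \<le> (?r \<delta>)\<^sup>2 * nu n A" if "\<delta> > 0" for \<delta>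
    using opnorm_nonneg[of n k X] that assms admissible_congr
    by (intro nu_le_mult_if_admissible_mult) auto
  then show "\<forall>\<^sub>F \<delta> in at_right 0. nu k (congr sc n k X A) \<le> (?r \<delta>)\<^sup>2 * nu n A"
    using eventually_at_right_less[of "0 :: real"] by (auto elim: eventually_mono)
qed simp

lemma nu_dsum:
  assumes "n \<ge> 1" "m \<ge> 1" "A \<in> Mn n" "B \<in> Mn m"
  shows "nu (n + m) (dsum n m A B) = max (nu n A) (nu m B)"
proof -
  define D where "D = dsum n m A B"
  have D: "D \<in> Mn (n + m)" unfolding D_def dsum_def Mn_def by auto
  have A0: "A i j = 0" if "\<not> (i < n \<and> j < n)" for i j using assms(3) that unfolding Mn_def by auto
  have B0: "B i j = 0" if "\<not> (i < m \<and> j < m)" for i j using assms(4) that unfolding Mn_def by auto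
  have corner:
    "congr sc (n + m) n (\<lambda>p i. if p = 0 + i then 1 else 0) (mdiff (eI (n + m) t) D) = mdiff (eI n t) A"
    "congr sc (n + m) m (\<lambda>p i. if p = n + i then 1 else 0) (mdiff (eI (n + m) t) D) = mdiff (eI m t) B"
    for t
    unfolding congr_selection[OF vector_space_axioms]
    by (auto simp: fun_eq_iff mdiff_def mscaleR_def mscaleC_def ediag_def D_def dsum_def A0 B0)
  have blocks: "mdiff (eI (n + m) t) D =
      madd (congr sc n (n + m) (\<lambda>p i. if i = 0 + p then 1 else 0) (mdiff (eI n t) A))
           (congr sc m (n + m) (\<lambda>p i. if i = n + p then 1 else 0) (mdiff (eI m t) B))" for t
    unfolding madd_def congr_shift_embedding[OF vector_space_axioms]
    by (intro ext) (auto simp: mdiff_def mscaleR_def mscaleC_def ediag_def D_def dsum_def)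
  have "mdiff (eI n t) A \<in> C n" "mdiff (eI m t) B \<in> C m" if "mdiff (eI (n + m) t) D \<in> C (n + m)" for t
    unfolding corner[of t, symmetric] using assms that by (auto intro: cone_congr)
  then have compress: "t \<in> admissible n A" "t \<in> admissible m B" if "t \<in> admissible (n + m) D" for t
    using that unfolding admissible_def by auto
  have "nu n A \<le> 1 * nu (n + m) D" "nu m B \<le> 1 * nu (n + m) D"
    using compress assms by (intro nu_le_mult_if_admissible_mult[OF _ D]; simp)+
  moreover have "nu (n + m) D \<le> max (nu n A) (nu m B)"
  proof (rule dense_ge)
    fix t assume "max (nu n A) (nu m B) < t"
    then have "t \<in> admissible n A" "t \<in> admissible m B" using admissible_if_nu_less assms by auto
    then have "t \<in> admissible (n + m) D"
      using cone_add[of "n + m"] cone_congr assms blocks unfolding admissible_def by simp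
    then show "nu (n + m) D \<le> t" by (rule nu_le_admissible)
  qed
  ultimately show ?thesis unfolding D_def by linarith
qed

lemma matrix_gauge_nu: "matrix_gauge sc nu"
  unfolding matrix_gauge_def using nu_nonneg nu_add_le nu_mscaleR nu_congr_le nu_dsum by blast

end

theorem lemma4p5:
  fixes sc :: "complex \<Rightarrow> 'z::ab_group_add \<Rightarrow> 'z" and C :: "nat \<Rightarrow> 'z mat set" and e :: 'z
  assumes "accretive_AMOU_space sc C e"
  shows "matrix_gauge sc (nu_e sc C e)
    \<and> (\<forall>n\<ge>1. C n = {z \<in> Mn n. nu_e sc C e n (mneg z) = 0})"
proof -
  interpret amou_space sc C e using assms by unfold_locales
  show ?thesis using matrix_gauge_nu cone_eq_nu_neg_zero by blast
qed

end
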